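(* Let $X$ be a continuum, $K\subset X$ a subcontinuum and $x\in K$. If the quotient $X/K$ is coastal at the point $K$, then $X$ is coastal at $x$.
   Context: A continuum is a nondegenerate compact connected Hausdorff space. $X/K$ is the quotient of $X$ obtained by collapsing $K$ to a single point, also denoted $K$. For a continuum $Z$ and points $z,p$, $\kappa(z;p)$ is the union of all subcontinua $M\neq Z$ of $Z$ with $z\in M$, $p\notin M$. $Z$ is coastal at $z$ if $\kappa(z;p)$ is dense in $Z$ for some $p\neq z$. *)

theory Defs
  imports "HOL-Analysis.Analysis"
begin

definition continuum :: "'a topology \<Rightarrow> bool" where
  "continuum X \<longleftrightarrow> compact_space X \<and> connected_space X \<and> Hausdorff_space X \<and>
     (\<exists>a b. a \<in> topspace X \<and> b \<in> topspace X \<and> a \<noteq> b)"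

definition subcontinuum :: "'a topology \<Rightarrow> 'a set \<Rightarrow> bool" where
  "subcontinuum X M \<longleftrightarrow> M \<subseteq> topspace X \<and> continuum (subtopology X M)"

definition kappa :: "'a topology \<Rightarrow> 'a \<Rightarrow> 'a \<Rightarrow> 'a set" where
  "kappa X z p = \<Union>{M. subcontinuum X M \<and> M \<noteq> topspace X \<and> z \<in> M \<and> p \<notin> M}"

definition coastal_at :: "'a topology \<Rightarrow> 'a \<Rightarrow> bool" where
  "coastal_at X z \<longleftrightarrow>
     (\<exists>p \<in> topspace X. p \<noteq> z \<and> X closure_of (kappa X z p) = topspace X)"

text \<open>Quotient X/K: points of K are collapsed to the single point K; every other
  point y becomes {y}.\<close>
definition collapse :: "'a set \<Rightarrow> 'a \<Rightarrow> 'a set" where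
  "collapse K y = (if y \<in> K then K else {y})"

lemma istopology_collapse:
  "istopology (\<lambda>U. U \<subseteq> collapse K ` topspace X \<and>
                   openin X {y \<in> topspace X. collapse K y \<in> U})"
proof -
  have 1: "{y \<in> topspace X. collapse K y \<in> S \<inter> T} =
      {y \<in> topspace X. collapse K y \<in> S} \<inter> {y \<in> topspace X. collapse K y \<in> T}" for S T
    by auto
  have 2: "{y \<in> topspace X. collapse K y \<in> \<Union>F} =
      \<Union>((\<lambda>U. {y \<in> topspace X. collapse K y \<in> U}) ` F)" for F
    by auto
  show ?thesis
    unfolding istopology_def
    by (auto simp only: 1 2 intro!: openin_Int openin_Union)
qed

definition quotient_by :: "'a topology \<Rightarrow> 'a set \<Rightarrow> 'a set topology" where
  "quotient_by X K = topology (\<lambda>U. U \<subseteq> collapse K ` topspace X \<and>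
                   openin X {y \<in> topspace X. collapse K y \<in> U})"

end

theory Submission
  imports Defs
begin

text \<open>The collapsing map \<open>\<pi>: X \<rightarrow> X/K\<close> is continuous, closed, surjective and has the
  fibres \<open>K\<close> and singletons, so for a subcontinuum \<open>K\<close> of a Hausdorff space it is proper and
  monotone; hence preimages of subcontinua are subcontinua. If \<open>\<kappa>(K;p)\<close> is dense in \<open>X/K\<close>
  and \<open>\<pi> y = p\<close>, every subcontinuum of \<open>X/K\<close> through \<open>K\<close> missing \<open>p\<close> pulls back to a proper
  subcontinuum of \<open>X\<close> through \<open>x\<close> missing \<open>y\<close>, so \<open>\<pi>\<^sup>-\<^sup>1(\<kappa>(K;p)) \<subseteq> \<kappa>(x;y)\<close>. This preimage
  is dense in \<open>X\<close>: its closure contains \<open>K\<close>, hence is saturated, so its image is closed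
  and contains \<open>\<kappa>(K;p)\<close>.\<close>

lemma subcontinuum_iff:
  assumes "Hausdorff_space X"
  shows "subcontinuum X M \<longleftrightarrow>
           compactin X M \<and> connectedin X M \<and> (\<exists>a\<in>M. \<exists>b\<in>M. a \<noteq> b)"
  using assms
  by (auto simp: subcontinuum_def continuum_def compactin_subspace connectedin_def
                 Hausdorff_space_subtopology)

lemma subcontinuum_preimage:
  assumes "Hausdorff_space X" "continuous_map X Y f" "proper_map X Y f"
    and "monotone_map X Y f" "f ` topspace X = topspace Y" "subcontinuum Y M"
  shows "subcontinuum X {x \<in> topspace X. f x \<in> M}"
proof -
  have M: "compactin Y M" "connectedin Y M" "M \<subseteq> topspace Y"
    using assms(6) by (auto simp: subcontinuum_def continuum_def compactin_subspace connectedin_def)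
  obtain a b where "a \<in> M" "b \<in> M" "a \<noteq> b"
    using assms(6) by (auto simp: subcontinuum_def continuum_def)
  moreover have "a \<in> f ` topspace X" "b \<in> f ` topspace X"
    using \<open>a \<in> M\<close> \<open>b \<in> M\<close> M(3) assms(5) by auto
  ultimately obtain a' b' where "a' \<in> topspace X" "f a' = a" "b' \<in> topspace X" "f b' = b"
    by (auto simp only: image_iff)
  then have "\<exists>u \<in> {x \<in> topspace X. f x \<in> M}. \<exists>v \<in> {x \<in> topspace X. f x \<in> M}. u \<noteq> v"
    using \<open>a \<in> M\<close> \<open>b \<in> M\<close> \<open>a \<noteq> b\<close> by auto
  moreover have "connectedin X {x \<in> topspace X. f x \<in> M}"
    using monotone_closed_map[OF assms(2) proper_imp_closed_map[OF assms(3)] assms(5)]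
      assms(4) M(2) by blast
  moreover have "compactin X {x \<in> topspace X. f x \<in> M}"
    using compactin_proper_map_preimage[OF assms(3) M(1)] .
  ultimately show ?thesis
    by (simp add: subcontinuum_iff[OF assms(1)])
qed

lemma kappa_preimage_subset:
  assumes "Hausdorff_space X" "continuous_map X Y f" "proper_map X Y f"
    and "monotone_map X Y f" "f ` topspace X = topspace Y"
    and "x \<in> topspace X" "f x = z" "f y = p"
  shows "{w \<in> topspace X. f w \<in> kappa Y z p} \<subseteq> kappa X x y"
proof
  fix w assume "w \<in> {w \<in> topspace X. f w \<in> kappa Y z p}"
  then obtain M where w: "w \<in> topspace X" "f w \<in> M"
    and M: "subcontinuum Y M" "M \<noteq> topspace Y" "z \<in> M" "p \<notin> M"
    unfolding kappa_def by blast
  define N where "N = {v \<in> topspace X. f v \<in> M}"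
  have "subcontinuum X N"
    unfolding N_def using subcontinuum_preimage[OF assms(1-5) M(1)] .
  moreover have "N \<noteq> topspace X"
  proof
    assume "N = topspace X"
    then have "topspace Y = f ` N"
      using assms(5) by simp
    then have "topspace Y \<subseteq> M"
      by (auto simp: N_def)
    with M(1,2) show False
      by (auto simp: subcontinuum_def)
  qed
  moreover have "x \<in> N" "y \<notin> N" "w \<in> N"
    using w M(3,4) assms(6-8) by (auto simp: N_def)
  ultimately show "w \<in> kappa X x y"
    unfolding kappa_def by blast
qed

lemma openin_quotient_by:
  "openin (quotient_by X K) U \<longleftrightarrow>
     U \<subseteq> collapse K ` topspace X \<and> openin X {y \<in> topspace X. collapse K y \<in> U}"
  unfolding quotient_by_def using istopology_collapse[of K X] by simp

lemma topspace_quotient_by: "topspace (quotient_by X K) = collapse K ` topspace X"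
proof -
  have "{y \<in> topspace X. collapse K y \<in> collapse K ` topspace X} = topspace X"
    by blast
  then have "openin (quotient_by X K) (collapse K ` topspace X)"
    unfolding openin_quotient_by by simp
  then show ?thesis
    using openin_quotient_by[of X K "topspace (quotient_by X K)"]
    by (auto dest: openin_subset)
qed

lemma continuous_map_collapse: "continuous_map X (quotient_by X K) (collapse K)"
  unfolding continuous_map_def topspace_quotient_by openin_quotient_by by auto

lemma collapse_preimage_image:
  assumes "C \<subseteq> topspace X"
  shows "{y \<in> topspace X. collapse K y \<in> collapse K ` C} =
           C \<union> (if C \<inter> K = {} then {} else K \<inter> topspace X)"
  using assms by (auto simp: collapse_def split: if_splits)

lemma closed_map_collapse:
  assumes "closedin X K"
  shows "closed_map X (quotient_by X K) (collapse K)"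
  unfolding closed_map_def
proof (intro allI impI)
  fix C assume C: "closedin X C"
  define C' where "C' = C \<union> (if C \<inter> K = {} then {} else K \<inter> topspace X)"
  have "closedin X C'"
    using C assms by (simp add: C'_def closedin_Un closedin_Int)
  have "{y \<in> topspace X. collapse K y \<in> collapse K ` topspace X - collapse K ` C}
          = topspace X - {y \<in> topspace X. collapse K y \<in> collapse K ` C}"
    by blast
  also have "\<dots> = topspace X - C'"
    using collapse_preimage_image[OF closedin_subset[OF C]] by (simp add: C'_def)
  finally have "openin (quotient_by X K) (collapse K ` topspace X - collapse K ` C)"
    using \<open>closedin X C'\<close> by (simp add: openin_quotient_by openin_diff)
  then show "closedin (quotient_by X K) (collapse K ` C)"
    using closedin_subset[OF C] by (auto simp: closedin_def topspace_quotient_by)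
qed

lemma fibre_collapse:
  assumes "K \<subseteq> topspace X" "q \<in> topspace (quotient_by X K)"
  shows "{y \<in> topspace X. collapse K y = q} = K \<or> (\<exists>a. {y \<in> topspace X. collapse K y = q} = {a})"
proof -
  obtain a where a: "a \<in> topspace X" "q = collapse K a"
    using assms(2) by (auto simp: topspace_quotient_by)
  show ?thesis
  proof (cases "a \<in> K")
    case True
    then have "{y \<in> topspace X. collapse K y = q} = K"
      using a assms(1) by (auto simp: collapse_def)
    then show ?thesis ..
  next
    case False
    then have "{y \<in> topspace X. collapse K y = q} = {a}"
      using a by (auto simp: collapse_def)
    then show ?thesis by blast
  qed
qed

lemma proper_map_collapse:
  assumes "closedin X K" "compactin X K"
  shows "proper_map X (quotient_by X K) (collapse K)"
  unfolding proper_map_def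
proof (intro conjI ballI closed_map_collapse[OF assms(1)])
  fix q assume "q \<in> topspace (quotient_by X K)"
  then show "compactin X {y \<in> topspace X. collapse K y = q}"
    using fibre_collapse[OF closedin_subset[OF assms(1)]] assms(2) by fastforce
qed

lemma monotone_map_collapse:
  assumes "K \<subseteq> topspace X" "connectedin X K"
  shows "monotone_map X (quotient_by X K) (collapse K)"
  unfolding monotone_map_def
proof (intro conjI ballI)
  fix q assume "q \<in> topspace (quotient_by X K)"
  then show "connectedin X {y \<in> topspace X. collapse K y = q}"
    using fibre_collapse[OF assms(1)] assms(2) by fastforce
qed (simp add: topspace_quotient_by)

lemma closure_of_collapse_preimage:
  assumes "closedin X K" "K \<in> A"
    and dense: "quotient_by X K closure_of A = topspace (quotient_by X K)"
  shows "X closure_of {y \<in> topspace X. collapse K y \<in> A} = topspace X"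
proof -
  define S where "S = {y \<in> topspace X. collapse K y \<in> A}"
  define C where "C = X closure_of S"
  have "K \<subseteq> S"
    using closedin_subset[OF assms(1)] assms(2) by (auto simp: S_def collapse_def)
  then have KC: "K \<subseteq> C"
    using closure_of_subset[of S X] by (auto simp: S_def C_def)
  have "topspace (quotient_by X K) \<inter> A \<subseteq> collapse K ` C"
    using closure_of_subset[of S X] by (auto simp: topspace_quotient_by S_def C_def)
  moreover have "closedin (quotient_by X K) (collapse K ` C)"
    using closed_map_collapse[OF assms(1)] by (simp add: C_def closed_map_def)
  ultimately have "quotient_by X K closure_of (topspace (quotient_by X K) \<inter> A)
                     \<subseteq> collapse K ` C"
    by (rule closure_of_minimal)
  then have "topspace (quotient_by X K) \<subseteq> collapse K ` C"
    using closure_of_restrict[of "quotient_by X K" A] dense by simp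
  then have "topspace X \<subseteq> {y \<in> topspace X. collapse K y \<in> collapse K ` C}"
    by (auto simp: topspace_quotient_by)
  also have "\<dots> = C"
    using collapse_preimage_image[of C X K] KC closure_of_subset_topspace[of X S]
    by (auto simp: C_def)
  finally show ?thesis
    by (simp add: C_def S_def closure_of_subset_topspace subset_antisym)
qed

theorem mainTheorem15:
  fixes X :: "'a topology" and K :: "'a set" and x :: 'a
  assumes "continuum X"
    and "subcontinuum X K"
    and "x \<in> K"
    and "coastal_at (quotient_by X K) K"
  shows "coastal_at X x"
proof -
  have Haus: "Hausdorff_space X"
    using assms(1) by (simp add: continuum_def)
  have K: "compactin X K" "connectedin X K" "K \<subseteq> topspace X"
    using assms(2) Haus by (auto simp: subcontinuum_iff dest: compactin_subset_topspace)
  then have "closedin X K"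
    using Haus compactin_imp_closedin by blast
  obtain p where p: "p \<in> topspace (quotient_by X K)" "p \<noteq> K"
    and dense: "quotient_by X K closure_of kappa (quotient_by X K) K p
                  = topspace (quotient_by X K)"
    using assms(4) unfolding coastal_at_def by blast
  obtain y where y: "y \<in> topspace X" "collapse K y = p"
    using p(1) by (auto simp: topspace_quotient_by)
  define S where "S = {w \<in> topspace X. collapse K w \<in> kappa (quotient_by X K) K p}"
  have "kappa (quotient_by X K) K p \<noteq> {}"
    using dense p(1) by auto
  then have "K \<in> kappa (quotient_by X K) K p"
    unfolding kappa_def by blast
  then have S_dense: "X closure_of S = topspace X"
    unfolding S_def by (rule closure_of_collapse_preimage[OF \<open>closedin X K\<close> _ dense])
  have "collapse K x = K" "x \<in> topspace X"
    using assms(3) K(3) by (auto simp: collapse_def)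
  then have "S \<subseteq> kappa X x y"
    unfolding S_def
    using kappa_preimage_subset[OF Haus continuous_map_collapse
        proper_map_collapse[OF \<open>closedin X K\<close> K(1)] monotone_map_collapse[OF K(3,2)]
        topspace_quotient_by[symmetric]] y(2)
    by blast
  then have "X closure_of kappa X x y = topspace X"
    using closure_of_mono[of S "kappa X x y" X] S_dense closure_of_subset_topspace[of X]
    by blast
  moreover have "y \<noteq> x"
    using assms(3) y(2) p(2) by (auto simp: collapse_def)
  ultimately show ?thesis
    unfolding coastal_at_def using y(1) by blast
qed

end
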